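(* Let $\mathcal{R}_i$ be a rule stratum of a stratifiable Datalog program and let $t \ge 0$. Assume every rule $r \in \mathcal{R}_i$ has arity $|\mathcal{X}(r)| \ge 2$ and every literal in its body $\mathrm{B}(r)$ has arity at most $2$. Fix a total order $\mathit{rank}$ on edges. For each $r \in \mathcal{R}_i$, with $k = |\mathcal{X}(r)|$, enumerate all $k$-cliques of the substitution consistency graph $\mathcal{G}(r, J_i^t)$ that are seeded at (i.e., contain) some edge $e \in \Delta\mathcal{E}_{i,r}^t$, and report such a clique $\mathcal{C}$ (from seed $e$) only if its owner $\omega(\mathcal{C})$ equals $e$. Let $H_i^t$ be the set of heads $\mathrm{H}(r[\rho])$ of the ground rules corresponding to the reported cliques $\{x/\rho(x) \mid x \in \mathcal{X}(r)\}$. Then $$H_i^t = \{\mathrm{H}(\bar r) \mid \bar r \in \mathrm{gr}(\mathcal{R}_i, J_i^t),\ \mathrm{B}(\bar r) \cap \Delta_i^t \neq \emptyset\},$$ and consequently $\Delta_i^{t+1} = H_i^t \setminus J_i^t$.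
   Context: A Datalog program is a pair $\langle \mathcal{F}, \mathcal{R}\rangle$ of a set $\mathcal{F}$ of facts (ground atoms over predicates with fixed arities) and a set $\mathcal{R}$ of rules $h \leftarrow b_1,\ldots,b_k$ with head atom $h=\mathrm{H}(r)$ and body literals $\mathrm{B}(r)=\{b_1,\ldots,b_k\}$ (atoms or negated atoms, whose arguments are variables or object constants). $\mathcal{X}(y)$ denotes the set of variables occurring in $y$, and the arity of $y$ is $|\mathcal{X}(y)|$; $\mathcal{O}$ is the set of objects. For a substitution $\rho$ (a map from variables to objects), $y[\rho]$ replaces each variable $x$ by $\rho(x)$. A ground rule is applicable in a fact set $J$ if every positive body atom is in $J$ and every negated body atom is not in $J$; $\mathrm{gr}(\mathcal{R}', J)$ is the set of ground instances of rules in $\mathcal{R}'$ applicable in $J$. A program is stratifiable if its predicates can be partitioned into strata $\mathcal{P}_1,\ldots,\mathcal{P}_\ell$ such that if $P$ occurs positively (resp. negatively) in the body of a rule whose head predicate is $P'$, with $P\in\mathcal{P}_a$, $P'\in\mathcal{P}_b$, then $a\le b$ (resp. $a<b$); rule stratum $\mathcal{R}_i$ consists of the rules whose head predicate is in $\mathcal{P}_i$. With $\mathcal{F}_0=\mathcal{F}$, semi-naive evaluation of stratum $i$ sets $J_i^0 = \Delta_i^0 = \mathcal{F}_{i-1}$, and for $t \ge 0$: $\Delta_i^{t+1} = \{\mathrm{H}(\bar r) \mid \bar r \in \mathrm{gr}(\mathcal{R}_i, J_i^t),\ \mathrm{B}(\bar r)\cap \Delta_i^t \neq \emptyset\} \setminus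 J_i^t$ and $J_i^{t+1} = J_i^t \cup \Delta_i^{t+1}$; it stops when $\Delta_i^t=\emptyset$, giving $\mathcal{F}_i = J_i^t$. Substitution consistency graph $\mathcal{G}(r,J)$ of a rule $r$ in a fact set $J$: vertex set $\{x/o \mid x \in \mathcal{X}(r), o \in \mathcal{O}\}$; the edges are all pairs $\{v,v'\}$ of vertices except those in $\mathcal{I}^{\neq}\cup\mathcal{I}^+\cup\mathcal{I}^-$, where $\mathcal{I}^{\neq}$ is the set of pairs $\{x/o_1, x/o_2\}$ with $o_1\neq o_2$; $\mathcal{I}^+$ is the set of pairs $\{v,v'\}$ such that some positive body atom $p$ of $r$, after applying the partial substitution $\{v,v'\}$, matches no atom of $J$; and $\mathcal{I}^-$ is the set of pairs $\{v,v'\}$ such that for some negated body atom $p$ of $r$, $p[v,v'] \in J$. An atom $P(x_1,\ldots,x_n)$ matches $P'(x_1',\ldots,x_n')$ iff $P=P'$ and for every $i$, $x_i$ or $x_i'$ is a variable or else $x_i = x_i'$. $\Delta$-edges: $\Delta\mathcal{E}_{i,r}^t = \mathcal{E}(\mathcal{G}(r, J_i^t)) \setminus \mathcal{E}(\mathcal{G}(r, J_i^{t-1}))$, with the convention $J_i^{-1} = \emptyset$. Owner: for a $k$-clique $\mathcal{C}$ ($k\ge2$) containing at least one edge of $\Delta\mathcal{E}_{i,r}^t$, $\omega(\mathcal{C})$ is the edge of $\Delta\mathcal{E}_{i,r}^t$ with both endpoints in $\mathcal{C}$ of minimum $\mathit{rank}$. *)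

theory Defs
  imports Main
begin

text \<open>Predicates have type 'p, variables 'v, objects 'o (the object set O is UNIV :: 'o set).\<close>

datatype ('v,'o) trm = Var 'v | Obj 'o
datatype ('p,'v,'o) atom = Atom 'p "('v,'o) trm list"
datatype ('p,'v,'o) lit = Pos "('p,'v,'o) atom" | Neg "('p,'v,'o) atom"
datatype ('p,'v,'o) rule = Rule "('p,'v,'o) atom" "('p,'v,'o) lit list"

text \<open>Facts are ground atoms, represented as a predicate with a list of objects.\<close>
type_synonym ('p,'o) fact = "'p \<times> 'o list"

fun atom_pred :: "('p,'v,'o) atom \<Rightarrow> 'p" where
  "atom_pred (Atom P ts) = P"

fun atom_args :: "('p,'v,'o) atom \<Rightarrow> ('v,'o) trm list" where
  "atom_args (Atom P ts) = ts"

fun lit_atom :: "('p,'v,'o) lit \<Rightarrow> ('p,'v,'o) atom" where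
  "lit_atom (Pos a) = a" | "lit_atom (Neg a) = a"

fun head :: "('p,'v,'o) rule \<Rightarrow> ('p,'v,'o) atom" where
  "head (Rule h b) = h"

fun body :: "('p,'v,'o) rule \<Rightarrow> ('p,'v,'o) lit set" where
  "body (Rule h b) = set b"

definition pos_atoms :: "('p,'v,'o) rule \<Rightarrow> ('p,'v,'o) atom set" where
  "pos_atoms r = {a. Pos a \<in> body r}"

definition neg_atoms :: "('p,'v,'o) rule \<Rightarrow> ('p,'v,'o) atom set" where
  "neg_atoms r = {a. Neg a \<in> body r}"

fun vars_trm :: "('v,'o) trm \<Rightarrow> 'v set" where
  "vars_trm (Var x) = {x}" | "vars_trm (Obj c) = {}"

definition vars_atom :: "('p,'v,'o) atom \<Rightarrow> 'v set" where
  "vars_atom a = (\<Union>t\<in>set (atom_args a). vars_trm t)"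

definition vars_lit :: "('p,'v,'o) lit \<Rightarrow> 'v set" where
  "vars_lit l = vars_atom (lit_atom l)"

definition vars_rule :: "('p,'v,'o) rule \<Rightarrow> 'v set" where
  "vars_rule r = vars_atom (head r) \<union> (\<Union>l\<in>body r. vars_lit l)"

fun subst_trm :: "('v \<Rightarrow> 'o) \<Rightarrow> ('v,'o) trm \<Rightarrow> 'o" where
  "subst_trm \<rho> (Var x) = \<rho> x" | "subst_trm \<rho> (Obj c) = c"

definition ground_atom :: "('v \<Rightarrow> 'o) \<Rightarrow> ('p,'v,'o) atom \<Rightarrow> ('p,'o) fact" where
  "ground_atom \<rho> a = (atom_pred a, map (subst_trm \<rho>) (atom_args a))"

definition ground_pos :: "('p,'v,'o) rule \<Rightarrow> ('v \<Rightarrow> 'o) \<Rightarrow> ('p,'o) fact set" where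
  "ground_pos r \<rho> = ground_atom \<rho> ` pos_atoms r"

definition ground_neg :: "('p,'v,'o) rule \<Rightarrow> ('v \<Rightarrow> 'o) \<Rightarrow> ('p,'o) fact set" where
  "ground_neg r \<rho> = ground_atom \<rho> ` neg_atoms r"

definition applicable :: "('p,'o) fact set \<Rightarrow> ('p,'v,'o) rule \<Rightarrow> ('v \<Rightarrow> 'o) \<Rightarrow> bool" where
  "applicable J r \<rho> \<longleftrightarrow> ground_pos r \<rho> \<subseteq> J \<and> ground_neg r \<rho> \<inter> J = {}"

text \<open>The set {H(rbar) | rbar in gr(Rs,J), B(rbar) \<inter> D \<noteq> {}}. Only positive body
  literals of a ground rule are facts, so B(rbar) \<inter> D is the set of positive ground body atoms in D.\<close>
definition sn_heads :: "('p,'v,'o) rule set \<Rightarrow> ('p,'o) fact set \<Rightarrow> ('p,'o) fact set \<Rightarrow> ('p,'o) fact set" where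
  "sn_heads Rs J D = {ground_atom \<rho> (head r) | r \<rho>.
      r \<in> Rs \<and> applicable J r \<rho> \<and> ground_pos r \<rho> \<inter> D \<noteq> {}}"

definition stratification :: "('p,'v,'o) rule set \<Rightarrow> nat \<Rightarrow> ('p \<Rightarrow> nat) \<Rightarrow> bool" where
  "stratification Rs l strat \<longleftrightarrow>
     (\<forall>P. strat P \<in> {1..l}) \<and>
     (\<forall>r\<in>Rs. \<forall>a\<in>pos_atoms r. strat (atom_pred a) \<le> strat (atom_pred (head r))) \<and>
     (\<forall>r\<in>Rs. \<forall>a\<in>neg_atoms r. strat (atom_pred a) < strat (atom_pred (head r)))"

definition rule_stratum :: "('p,'v,'o) rule set \<Rightarrow> ('p \<Rightarrow> nat) \<Rightarrow> nat \<Rightarrow> ('p,'v,'o) rule set" where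
  "rule_stratum Rs strat i = {r\<in>Rs. strat (atom_pred (head r)) = i}"

definition sn_step :: "('p,'v,'o) rule set \<Rightarrow> ('p,'o) fact set \<times> ('p,'o) fact set
                         \<Rightarrow> ('p,'o) fact set \<times> ('p,'o) fact set" where
  "sn_step Rs JD = (let D' = sn_heads Rs (fst JD) (snd JD) - fst JD in (fst JD \<union> D', D'))"

text \<open>The evaluation stops when Delta becomes empty, after which J is constant; we take F_i as
  the union of all J_i^t (which coincides with the stopping value).\<close>
primrec F_str :: "('p,'o) fact set \<Rightarrow> ('p,'v,'o) rule set \<Rightarrow> ('p \<Rightarrow> nat) \<Rightarrow> nat \<Rightarrow> ('p,'o) fact set" where
  "F_str F Rs strat 0 = F"
| "F_str F Rs strat (Suc i) =
     (\<Union>t. fst ((sn_step (rule_stratum Rs strat (Suc i)) ^^ t) (F_str F Rs strat i, F_str F Rs strat i)))"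

definition sn_state :: "('p,'o) fact set \<Rightarrow> ('p,'v,'o) rule set \<Rightarrow> ('p \<Rightarrow> nat) \<Rightarrow> nat \<Rightarrow> nat
                         \<Rightarrow> ('p,'o) fact set \<times> ('p,'o) fact set" where
  "sn_state F Rs strat i t =
     (sn_step (rule_stratum Rs strat i) ^^ t) (F_str F Rs strat (i - 1), F_str F Rs strat (i - 1))"

definition Jst :: "('p,'o) fact set \<Rightarrow> ('p,'v,'o) rule set \<Rightarrow> ('p \<Rightarrow> nat) \<Rightarrow> nat \<Rightarrow> nat \<Rightarrow> ('p,'o) fact set" where
  "Jst F Rs strat i t = fst (sn_state F Rs strat i t)"

definition Dst :: "('p,'o) fact set \<Rightarrow> ('p,'v,'o) rule set \<Rightarrow> ('p \<Rightarrow> nat) \<Rightarrow> nat \<Rightarrow> nat \<Rightarrow> ('p,'o) fact set" where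
  "Dst F Rs strat i t = snd (sn_state F Rs strat i t)"

definition Jprev :: "('p,'o) fact set \<Rightarrow> ('p,'v,'o) rule set \<Rightarrow> ('p \<Rightarrow> nat) \<Rightarrow> nat \<Rightarrow> nat \<Rightarrow> ('p,'o) fact set" where
  "Jprev F Rs strat i t = (if t = 0 then {} else Jst F Rs strat i (t - 1))"

text \<open>A vertex x/o is the pair (x,o); an edge is a 2-element set of vertices.\<close>

definition psub_of :: "('v \<times> 'o) set \<Rightarrow> 'v \<Rightarrow> 'o option" where
  "psub_of S x = (if \<exists>c. (x,c) \<in> S then Some (SOME c. (x,c) \<in> S) else None)"

fun psubst_trm :: "('v \<Rightarrow> 'o option) \<Rightarrow> ('v,'o) trm \<Rightarrow> ('v,'o) trm" where
  "psubst_trm \<sigma> (Var x) = (case \<sigma> x of None \<Rightarrow> Var x | Some c \<Rightarrow> Obj c)"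
| "psubst_trm \<sigma> (Obj c) = Obj c"

definition psubst_atom :: "('v \<Rightarrow> 'o option) \<Rightarrow> ('p,'v,'o) atom \<Rightarrow> ('p,'v,'o) atom" where
  "psubst_atom \<sigma> a = Atom (atom_pred a) (map (psubst_trm \<sigma>) (atom_args a))"

definition matches :: "('p,'v,'o) atom \<Rightarrow> ('p,'o) fact \<Rightarrow> bool" where
  "matches a f \<longleftrightarrow> atom_pred a = fst f \<and> length (atom_args a) = length (snd f) \<and>
     (\<forall>j < length (snd f). (case atom_args a ! j of Var _ \<Rightarrow> True | Obj c \<Rightarrow> c = snd f ! j))"

definition atom_of_fact :: "('p,'o) fact \<Rightarrow> ('p,'v,'o) atom" where
  "atom_of_fact f = Atom (fst f) (map Obj (snd f))"

definition scg_verts :: "('p,'v,'o) rule \<Rightarrow> ('v \<times> 'o) set" where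
  "scg_verts r = {v. fst v \<in> vars_rule r}"

definition scg_edges :: "('p,'v,'o) rule \<Rightarrow> ('p,'o) fact set \<Rightarrow> ('v \<times> 'o) set set" where
  "scg_edges r J = {{v, v'} | v v'. v \<in> scg_verts r \<and> v' \<in> scg_verts r \<and> v \<noteq> v' \<and>
      \<comment> \<open>not in I^neq\<close>
      \<not> (fst v = fst v' \<and> snd v \<noteq> snd v') \<and>
      \<comment> \<open>not in I^+\<close>
      \<not> (\<exists>p\<in>pos_atoms r. \<forall>f\<in>J. \<not> matches (psubst_atom (psub_of {v, v'}) p) f) \<and>
      \<comment> \<open>not in I^-\<close>
      \<not> (\<exists>p\<in>neg_atoms r. psubst_atom (psub_of {v, v'}) p \<in> atom_of_fact ` J)}"

definition is_clique :: "('v \<times> 'o) set \<Rightarrow> ('v \<times> 'o) set set \<Rightarrow> nat \<Rightarrow> ('v \<times> 'o) set \<Rightarrow> bool" where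
  "is_clique V E k C \<longleftrightarrow> C \<subseteq> V \<and> finite C \<and> card C = k \<and>
     (\<forall>v\<in>C. \<forall>v'\<in>C. v \<noteq> v' \<longrightarrow> {v, v'} \<in> E)"

definition delta_edges :: "('p,'o) fact set \<Rightarrow> ('p,'v,'o) rule set \<Rightarrow> ('p \<Rightarrow> nat) \<Rightarrow> nat \<Rightarrow> ('p,'v,'o) rule
                            \<Rightarrow> nat \<Rightarrow> ('v \<times> 'o) set set" where
  "delta_edges F Rs strat i r t =
     scg_edges r (Jst F Rs strat i t) - scg_edges r (Jprev F Rs strat i t)"

text \<open>Owner of a clique C w.r.t. the Delta-edge set D and the total order rk (a relation,
  (e,e') \<in> rk meaning rank e \<le> rank e'): the rk-minimal edge of D with both endpoints in C.\<close>
definition owner :: "('v \<times> 'o) set rel \<Rightarrow> ('v \<times> 'o) set set \<Rightarrow> ('v \<times> 'o) set \<Rightarrow> ('v \<times> 'o) set" where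
  "owner rk D C = (THE e. e \<in> D \<and> e \<subseteq> C \<and> (\<forall>e'\<in>D. e' \<subseteq> C \<longrightarrow> (e, e') \<in> rk))"

definition clique_subst :: "('v \<times> 'o) set \<Rightarrow> 'v \<Rightarrow> 'o" where
  "clique_subst C x = (SOME c. (x, c) \<in> C)"

definition reported_heads :: "('p,'o) fact set \<Rightarrow> ('p,'v,'o) rule set \<Rightarrow> ('p \<Rightarrow> nat) \<Rightarrow> ('v \<times> 'o) set rel
                               \<Rightarrow> nat \<Rightarrow> nat \<Rightarrow> ('p,'o) fact set" where
  "reported_heads F Rs strat rk i t =
     {ground_atom (clique_subst C) (head r) | r C e.
        r \<in> rule_stratum Rs strat i \<and>
        is_clique (scg_verts r) (scg_edges r (Jst F Rs strat i t)) (card (vars_rule r)) C \<and>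
        e \<in> delta_edges F Rs strat i r t \<and> e \<subseteq> C \<and>
        owner rk (delta_edges F Rs strat i r t) C = e}"

definition wf_program :: "('p \<Rightarrow> nat) \<Rightarrow> ('p,'o) fact set \<Rightarrow> ('p,'v,'o) rule set \<Rightarrow> bool" where
  "wf_program ar F Rs \<longleftrightarrow> finite F \<and> finite Rs \<and>
     (\<forall>f\<in>F. length (snd f) = ar (fst f)) \<and>
     (\<forall>r\<in>Rs. length (atom_args (head r)) = ar (atom_pred (head r)) \<and>
        (\<forall>l\<in>body r. length (atom_args (lit_atom l)) = ar (atom_pred (lit_atom l))))"

end

(*
  A k-clique of G(r, J) with k = |X(r)| contains exactly one vertex x/o per variable x, so it is
  the graph {x/\<rho>(x) | x \<in> X(r)} of a substitution \<rho>. If every body literal has at most two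
  variables, each body literal is fully instantiated by a single edge of that graph; hence the graph
  is a clique iff r[\<rho>] is applicable in J, and, for J' \<subseteq> J, it contains an edge of G(r, J) that
  is not an edge of G(r, J') iff some positive body atom of r[\<rho>] lies in J - J'. With J = J_i^t and
  J' = J_i^(t-1) the latter set is \<Delta>_i^t. As rank is a total order, each such clique has exactly
  one owner, so it is reported from exactly one seed.
*)
theory Submission
  imports Defs
begin

lemma psub_of_subst_pair: "psub_of {(x, \<rho> x), (y, \<rho> y)} = (Some \<circ> \<rho>) |` {x, y}"
  by (rule ext) (auto simp: psub_of_def restrict_map_def)

lemma ground_atom_cong:
  assumes "\<And>x. x \<in> vars_atom a \<Longrightarrow> \<rho> x = \<rho>' x"
  shows "ground_atom \<rho> a = ground_atom \<rho>' a"
proof -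
  have "subst_trm \<rho> t = subst_trm \<rho>' t" if "t \<in> set (atom_args a)" for t
  proof -
    have "vars_trm t \<subseteq> vars_atom a" using that by (auto simp: vars_atom_def)
    then show ?thesis using assms by (cases t) auto
  qed
  then show ?thesis by (simp add: ground_atom_def)
qed

lemma matches_psubst_atom_ground_atom:
  "matches (psubst_atom ((Some \<circ> \<rho>) |` X) p) (ground_atom \<rho> p)"
  unfolding matches_def
proof (intro conjI allI impI)
  fix j assume "j < length (snd (ground_atom \<rho> p))"
  then show "case atom_args (psubst_atom ((Some \<circ> \<rho>) |` X) p) ! j of
      Var x \<Rightarrow> True | Obj c \<Rightarrow> c = snd (ground_atom \<rho> p) ! j"
    by (cases "atom_args p ! j") (auto simp: psubst_atom_def ground_atom_def restrict_map_def)
qed (auto simp: psubst_atom_def ground_atom_def)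

lemma psubst_atom_restrict_covering:
  assumes "vars_atom p \<subseteq> X"
  shows "psubst_atom ((Some \<circ> \<rho>) |` X) p = atom_of_fact (ground_atom \<rho> p)"
proof -
  have "psubst_trm ((Some \<circ> \<rho>) |` X) t = Obj (subst_trm \<rho> t)" if "t \<in> set (atom_args p)" for t
  proof -
    have "vars_trm t \<subseteq> X" using that assms by (auto simp: vars_atom_def)
    then show ?thesis by (cases t) auto
  qed
  then show ?thesis by (simp add: psubst_atom_def atom_of_fact_def ground_atom_def)
qed

lemma psubst_atom_eq_atom_of_fact:
  assumes "psubst_atom ((Some \<circ> \<rho>) |` X) p = atom_of_fact f"
  shows "f = ground_atom \<rho> p"
proof -
  have obj: "psubst_trm ((Some \<circ> \<rho>) |` X) t = Obj c \<Longrightarrow> c = subst_trm \<rho> t" for t c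
    by (cases t) (auto simp: restrict_map_def split: if_splits)
  have "map (psubst_trm ((Some \<circ> \<rho>) |` X)) ts = map Obj cs \<Longrightarrow> cs = map (subst_trm \<rho>) ts"
    for ts cs
    by (induction ts arbitrary: cs) (auto dest: obj)
  then show ?thesis
    using assms by (cases f) (simp add: psubst_atom_def atom_of_fact_def ground_atom_def)
qed

lemma matches_atom_of_fact: "matches (atom_of_fact g) f \<Longrightarrow> f = g"
  by (cases f, cases g) (auto simp: matches_def atom_of_fact_def intro: nth_equalityI)

lemma matches_psubst_atom_restrict_covering:
  assumes "vars_atom p \<subseteq> X" and "matches (psubst_atom ((Some \<circ> \<rho>) |` X) p) f"
  shows "f = ground_atom \<rho> p"
  using assms psubst_atom_restrict_covering matches_atom_of_fact by metis

text \<open>The pair {x/\<rho>(x), y/\<rho>(y)} lies in neither I^+ nor I^-.\<close>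

definition consistent_pair ::
    "('p,'v,'o) rule \<Rightarrow> ('p,'o) fact set \<Rightarrow> ('v \<Rightarrow> 'o) \<Rightarrow> 'v \<Rightarrow> 'v \<Rightarrow> bool"
  where "consistent_pair r J \<rho> x y \<longleftrightarrow>
    (\<forall>p\<in>pos_atoms r. \<exists>f\<in>J. matches (psubst_atom ((Some \<circ> \<rho>) |` {x, y}) p) f) \<and>
    (\<forall>p\<in>neg_atoms r. psubst_atom ((Some \<circ> \<rho>) |` {x, y}) p \<notin> atom_of_fact ` J)"

lemma scg_edgesE:
  assumes "e \<in> scg_edges r J"
  obtains v v' where "e = {v, v'}" "fst v \<in> vars_rule r" "fst v' \<in> vars_rule r" "fst v \<noteq> fst v'"
  using assms unfolding scg_edges_def scg_verts_def by (auto simp: prod_eq_iff)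

lemma card_scg_edge: "e \<in> scg_edges r J \<Longrightarrow> card e = 2"
  by (erule scg_edgesE) auto

lemma subst_pair_in_scg_edges_iff:
  assumes "x \<in> vars_rule r" "y \<in> vars_rule r" "x \<noteq> y"
  shows "{(x, \<rho> x), (y, \<rho> y)} \<in> scg_edges r J \<longleftrightarrow> consistent_pair r J \<rho> x y"
proof
  assume "{(x, \<rho> x), (y, \<rho> y)} \<in> scg_edges r J"
  then show "consistent_pair r J \<rho> x y"
    unfolding scg_edges_def consistent_pair_def psub_of_subst_pair[symmetric]
    by (auto simp: doubleton_eq_iff insert_commute)
next
  assume "consistent_pair r J \<rho> x y"
  then show "{(x, \<rho> x), (y, \<rho> y)} \<in> scg_edges r J"
    using assms unfolding scg_edges_def consistent_pair_def psub_of_subst_pair[symmetric]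
    by (auto simp: scg_verts_def)
qed

definition subst_clique :: "('v \<Rightarrow> 'o) \<Rightarrow> ('p,'v,'o) rule \<Rightarrow> ('v \<times> 'o) set" where
  "subst_clique \<rho> r = (\<lambda>x. (x, \<rho> x)) ` vars_rule r"

lemma clique_subst_subst_clique: "x \<in> vars_rule r \<Longrightarrow> clique_subst (subst_clique \<rho> r) x = \<rho> x"
  unfolding clique_subst_def subst_clique_def by (rule some_equality) auto

lemma is_clique_subst_clique_iff:
  assumes "finite (vars_rule r)"
  shows "is_clique (scg_verts r) (scg_edges r J) (card (vars_rule r)) (subst_clique \<rho> r) \<longleftrightarrow>
    (\<forall>x\<in>vars_rule r. \<forall>y\<in>vars_rule r. x \<noteq> y \<longrightarrow> consistent_pair r J \<rho> x y)"
proof -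
  have "card (subst_clique \<rho> r) = card (vars_rule r)"
    unfolding subst_clique_def by (rule card_image) (simp add: inj_on_def)
  moreover have "subst_clique \<rho> r \<subseteq> scg_verts r" "finite (subst_clique \<rho> r)"
    using assms by (auto simp: subst_clique_def scg_verts_def)
  ultimately show ?thesis
    unfolding is_clique_def
    by (auto simp: subst_clique_def subst_pair_in_scg_edges_iff[symmetric])
qed

lemma clique_eq_subst_clique:
  assumes clique: "is_clique (scg_verts r) (scg_edges r J) (card (vars_rule r)) C"
    and "finite (vars_rule r)"
  shows "C = subst_clique (clique_subst C) r"
proof -
  have inj: "inj_on fst C"
  proof (rule inj_onI, rule ccontr)
    fix v v' assume "v \<in> C" "v' \<in> C" "fst v = fst v'" "v \<noteq> v'"
    then have "{v, v'} \<in> scg_edges r J" using clique by (auto simp: is_clique_def)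
    then obtain w w' where "{v, v'} = {w, w'}" "fst w \<noteq> fst w'" by (rule scg_edgesE)
    then show False using \<open>fst v = fst v'\<close> by (auto simp: doubleton_eq_iff)
  qed
  have "fst ` C \<subseteq> vars_rule r" "card (fst ` C) = card (vars_rule r)"
    using clique inj by (auto simp: is_clique_def scg_verts_def card_image)
  then have vars: "fst ` C = vars_rule r" using assms(2) by (simp add: card_subset_eq)
  have subst: "clique_subst C x = c" if "(x, c) \<in> C" for x c
  proof -
    have "(x, clique_subst C x) \<in> C" unfolding clique_subst_def using that by (rule someI)
    from inj_onD[OF inj _ this that] show ?thesis by simp
  qed
  show ?thesis
    unfolding subst_clique_def
  proof (intro equalityI subsetI)
    fix v assume "v \<in> C"
    then show "v \<in> (\<lambda>x. (x, clique_subst C x)) ` vars_rule r"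
      using vars subst[of "fst v" "snd v"] by (intro image_eqI[of _ _ "fst v"]) auto
  next
    fix v assume "v \<in> (\<lambda>x. (x, clique_subst C x)) ` vars_rule r"
    then show "v \<in> C" using vars subst by force
  qed
qed

lemma covering_pair:
  assumes "finite V" "2 \<le> card V" "S \<subseteq> V" "card S \<le> 2"
  shows "\<exists>x\<in>V. \<exists>y\<in>V. x \<noteq> y \<and> S \<subseteq> {x, y}"
proof -
  obtain T where T: "T \<subseteq> V - S" "card T = 2 - card S"
    using obtain_subset_with_card_n[of "2 - card S" "V - S"] assms
    by (metis card_Diff_subset diff_le_mono finite_subset)
  have "finite S" "finite T"
    using assms T(1) finite_subset by blast+
  moreover have "S \<inter> T = {}" using T(1) by blast
  ultimately have "card (S \<union> T) = card S + card T" by (rule card_Un_disjoint)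
  then have "card (S \<union> T) = 2" using T(2) assms(4) by simp
  then obtain x y where "S \<union> T = {x, y}" "x \<noteq> y" by (auto simp: card_2_iff)
  then show ?thesis using assms(3) T(1) by blast
qed

definition binary_rule :: "('p,'v,'o) rule \<Rightarrow> bool" where
  "binary_rule r \<longleftrightarrow> 2 \<le> card (vars_rule r) \<and> (\<forall>b\<in>body r. card (vars_lit b) \<le> 2)"

lemma binary_rule_finite_vars: "binary_rule r \<Longrightarrow> finite (vars_rule r)"
  unfolding binary_rule_def using card.infinite by fastforce

lemma binary_rule_body_atom_covered:
  assumes "binary_rule r" "p \<in> pos_atoms r \<union> neg_atoms r"
  obtains x y where "x \<in> vars_rule r" "y \<in> vars_rule r" "x \<noteq> y" "vars_atom p \<subseteq> {x, y}"
proof -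
  have "vars_atom p \<subseteq> vars_rule r" "card (vars_atom p) \<le> 2"
    using assms by (auto simp: binary_rule_def vars_rule_def vars_lit_def pos_atoms_def neg_atoms_def)
  then show ?thesis
    using that covering_pair binary_rule_finite_vars assms(1) unfolding binary_rule_def by metis
qed

lemma matching_facts_if_ground_pos_subset:
  assumes "ground_pos r \<rho> \<subseteq> J" "p \<in> pos_atoms r"
  shows "\<exists>f\<in>J. matches (psubst_atom ((Some \<circ> \<rho>) |` X) p) f"
proof
  show "ground_atom \<rho> p \<in> J" using assms by (auto simp: ground_pos_def)
qed (rule matches_psubst_atom_ground_atom)

lemma no_fact_if_ground_neg_disjoint:
  assumes "ground_neg r \<rho> \<inter> J = {}" "p \<in> neg_atoms r"
  shows "psubst_atom ((Some \<circ> \<rho>) |` X) p \<notin> atom_of_fact ` J"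
proof
  assume "psubst_atom ((Some \<circ> \<rho>) |` X) p \<in> atom_of_fact ` J"
  then obtain f where "f \<in> J" "psubst_atom ((Some \<circ> \<rho>) |` X) p = atom_of_fact f" by blast
  then have "ground_atom \<rho> p \<in> J" using psubst_atom_eq_atom_of_fact by metis
  then show False using assms by (auto simp: ground_neg_def)
qed

lemma consistent_pair_if_applicable: "applicable J r \<rho> \<Longrightarrow> consistent_pair r J \<rho> x y"
  using matching_facts_if_ground_pos_subset[of r \<rho> J] no_fact_if_ground_neg_disjoint[of r \<rho> J]
  unfolding applicable_def consistent_pair_def by simp

lemma applicable_if_consistent_pairs:
  assumes "binary_rule r"
    and consistent: "\<forall>x\<in>vars_rule r. \<forall>y\<in>vars_rule r. x \<noteq> y \<longrightarrow> consistent_pair r J \<rho> x y"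
  shows "applicable J r \<rho>"
  unfolding applicable_def
proof (intro conjI subsetI equals0I)
  fix g assume "g \<in> ground_pos r \<rho>"
  then obtain p where p: "p \<in> pos_atoms r" "g = ground_atom \<rho> p" by (auto simp: ground_pos_def)
  obtain x y where xy: "x \<in> vars_rule r" "y \<in> vars_rule r" "x \<noteq> y" "vars_atom p \<subseteq> {x, y}"
    by (rule binary_rule_body_atom_covered[OF assms(1)]) (use p in blast)
  then have "consistent_pair r J \<rho> x y" using consistent by blast
  then obtain f where "f \<in> J" "matches (psubst_atom ((Some \<circ> \<rho>) |` {x, y}) p) f"
    using p(1) unfolding consistent_pair_def by blast
  then show "g \<in> J" using matches_psubst_atom_restrict_covering[OF xy(4)] p(2) by blast
next
  fix g assume "g \<in> ground_neg r \<rho> \<inter> J"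
  then obtain p where p: "p \<in> neg_atoms r" "ground_atom \<rho> p \<in> J" by (auto simp: ground_neg_def)
  obtain x y where xy: "x \<in> vars_rule r" "y \<in> vars_rule r" "x \<noteq> y" "vars_atom p \<subseteq> {x, y}"
    by (rule binary_rule_body_atom_covered[OF assms(1)]) (use p in blast)
  then have "consistent_pair r J \<rho> x y" using consistent by blast
  then have "psubst_atom ((Some \<circ> \<rho>) |` {x, y}) p \<notin> atom_of_fact ` J"
    using p(1) unfolding consistent_pair_def by blast
  then show False using p(2) psubst_atom_restrict_covering[OF xy(4), of \<rho>] by auto
qed

lemma is_clique_subst_clique_iff_applicable:
  assumes "binary_rule r"
  shows "is_clique (scg_verts r) (scg_edges r J) (card (vars_rule r)) (subst_clique \<rho> r) \<longleftrightarrow>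
    applicable J r \<rho>"
  unfolding is_clique_subst_clique_iff[OF binary_rule_finite_vars[OF assms]]
proof
  show "applicable J r \<rho>" if "\<forall>x\<in>vars_rule r. \<forall>y\<in>vars_rule r. x \<noteq> y \<longrightarrow> consistent_pair r J \<rho> x y"
    using assms that by (rule applicable_if_consistent_pairs)
qed (simp add: consistent_pair_if_applicable)

lemma inconsistent_pair_iff_new_body_atom:
  assumes "binary_rule r" "J' \<subseteq> J" and applicable: "applicable J r \<rho>"
  shows "(\<exists>x\<in>vars_rule r. \<exists>y\<in>vars_rule r. x \<noteq> y \<and> \<not> consistent_pair r J' \<rho> x y) \<longleftrightarrow>
    ground_pos r \<rho> \<inter> (J - J') \<noteq> {}"
proof
  assume "\<exists>x\<in>vars_rule r. \<exists>y\<in>vars_rule r. x \<noteq> y \<and> \<not> consistent_pair r J' \<rho> x y"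
  then obtain x y where inconsistent: "\<not> consistent_pair r J' \<rho> x y" by blast
  have "ground_neg r \<rho> \<inter> J' = {}" using applicable \<open>J' \<subseteq> J\<close> by (auto simp: applicable_def)
  then obtain p where "p \<in> pos_atoms r" "\<not> (\<exists>f\<in>J'. matches (psubst_atom ((Some \<circ> \<rho>) |` {x, y}) p) f)"
    using inconsistent no_fact_if_ground_neg_disjoint unfolding consistent_pair_def by blast
  then have "ground_atom \<rho> p \<in> ground_pos r \<rho> - J'"
    using matches_psubst_atom_ground_atom by (auto simp: ground_pos_def)
  then show "ground_pos r \<rho> \<inter> (J - J') \<noteq> {}"
    using applicable by (auto simp: applicable_def)
next
  assume "ground_pos r \<rho> \<inter> (J - J') \<noteq> {}"
  then obtain p where p: "p \<in> pos_atoms r" "ground_atom \<rho> p \<notin> J'" by (auto simp: ground_pos_def)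
  obtain x y where xy: "x \<in> vars_rule r" "y \<in> vars_rule r" "x \<noteq> y" "vars_atom p \<subseteq> {x, y}"
    by (rule binary_rule_body_atom_covered[OF assms(1)]) (use p in blast)
  have "\<not> consistent_pair r J' \<rho> x y"
  proof
    assume "consistent_pair r J' \<rho> x y"
    then obtain f where "f \<in> J'" "matches (psubst_atom ((Some \<circ> \<rho>) |` {x, y}) p) f"
      using p(1) unfolding consistent_pair_def by blast
    then show False using matches_psubst_atom_restrict_covering[OF xy(4)] p(2) by blast
  qed
  then show "\<exists>x\<in>vars_rule r. \<exists>y\<in>vars_rule r. x \<noteq> y \<and> \<not> consistent_pair r J' \<rho> x y"
    using xy by blast
qed

lemma delta_edge_in_subst_clique_iff:
  assumes "binary_rule r" "J' \<subseteq> J" "applicable J r \<rho>"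
  shows "(\<exists>e\<in>scg_edges r J - scg_edges r J'. e \<subseteq> subst_clique \<rho> r) \<longleftrightarrow>
    ground_pos r \<rho> \<inter> (J - J') \<noteq> {}"
proof -
  have "(\<exists>e\<in>scg_edges r J - scg_edges r J'. e \<subseteq> subst_clique \<rho> r) \<longleftrightarrow>
    (\<exists>x\<in>vars_rule r. \<exists>y\<in>vars_rule r. x \<noteq> y \<and> \<not> consistent_pair r J' \<rho> x y)"
  proof
    assume "\<exists>e\<in>scg_edges r J - scg_edges r J'. e \<subseteq> subst_clique \<rho> r"
    then obtain e where e: "e \<in> scg_edges r J" "e \<notin> scg_edges r J'" "e \<subseteq> subst_clique \<rho> r"
      by blast
    from e(1) obtain v v' where vv: "e = {v, v'}" "fst v \<noteq> fst v'" by (rule scg_edgesE)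
    then have "v \<in> subst_clique \<rho> r" "v' \<in> subst_clique \<rho> r" using e(3) by auto
    then obtain x y where xy: "x \<in> vars_rule r" "y \<in> vars_rule r" "v = (x, \<rho> x)" "v' = (y, \<rho> y)"
      by (auto simp: subst_clique_def)
    with vv have "x \<noteq> y" by simp
    then have "\<not> consistent_pair r J' \<rho> x y"
      using e(2) vv(1) xy subst_pair_in_scg_edges_iff[OF xy(1,2)] by simp
    then show "\<exists>x\<in>vars_rule r. \<exists>y\<in>vars_rule r. x \<noteq> y \<and> \<not> consistent_pair r J' \<rho> x y"
      using xy(1,2) \<open>x \<noteq> y\<close> by blast
  next
    assume "\<exists>x\<in>vars_rule r. \<exists>y\<in>vars_rule r. x \<noteq> y \<and> \<not> consistent_pair r J' \<rho> x y"
    then obtain x y where xy: "x \<in> vars_rule r" "y \<in> vars_rule r" "x \<noteq> y"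
      and inconsistent: "\<not> consistent_pair r J' \<rho> x y" by blast
    have "{(x, \<rho> x), (y, \<rho> y)} \<in> scg_edges r J"
      using subst_pair_in_scg_edges_iff[OF xy] consistent_pair_if_applicable[OF assms(3)] by simp
    moreover have "{(x, \<rho> x), (y, \<rho> y)} \<notin> scg_edges r J'"
      using subst_pair_in_scg_edges_iff[OF xy] inconsistent by simp
    moreover have "{(x, \<rho> x), (y, \<rho> y)} \<subseteq> subst_clique \<rho> r"
      using xy by (auto simp: subst_clique_def)
    ultimately show "\<exists>e\<in>scg_edges r J - scg_edges r J'. e \<subseteq> subst_clique \<rho> r" by blast
  qed
  also have "\<dots> \<longleftrightarrow> ground_pos r \<rho> \<inter> (J - J') \<noteq> {}"
    by (rule inconsistent_pair_iff_new_body_atom[OF assms])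
  finally show ?thesis .
qed

lemma linear_order_on_finite_has_least:
  assumes "linear_order_on A rk" "finite S" "S \<noteq> {}" "S \<subseteq> A"
  shows "\<exists>m\<in>S. \<forall>e\<in>S. (m, e) \<in> rk"
  using assms(2-4)
proof (induction S rule: finite_ne_induct)
  case (singleton x)
  then show ?case
    using assms(1) by (auto simp: linear_order_on_def partial_order_on_def preorder_on_def refl_on_def)
next
  case (insert x S)
  then obtain m where m: "m \<in> S" "\<forall>e\<in>S. (m, e) \<in> rk" by blast
  have "(x, m) \<in> rk \<or> (m, x) \<in> rk"
    using assms(1) insert m by (auto simp: linear_order_on_def total_on_def)
  moreover have "(x, x) \<in> rk" "trans rk"
    using assms(1) insert by (auto simp: linear_order_on_def partial_order_on_def preorder_on_def refl_on_def)
  ultimately show ?case using m by (metis insert_iff transD)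
qed

lemma owner_eqI:
  assumes "antisym rk" "e \<in> D" "e \<subseteq> C" "\<forall>e'\<in>D. e' \<subseteq> C \<longrightarrow> (e, e') \<in> rk"
  shows "owner rk D C = e"
  unfolding owner_def
proof (rule the_equality)
  fix e' assume "e' \<in> D \<and> e' \<subseteq> C \<and> (\<forall>e''\<in>D. e'' \<subseteq> C \<longrightarrow> (e', e'') \<in> rk)"
  then show "e' = e" using assms by (blast dest: antisymD)
qed (use assms in blast)

lemma owner_mem:
  assumes order: "linear_order_on A rk" and "finite C" "{e \<in> D. e \<subseteq> C} \<subseteq> A" "e \<in> D" "e \<subseteq> C"
  shows "owner rk D C \<in> D \<and> owner rk D C \<subseteq> C"
proof -
  have "finite {e \<in> D. e \<subseteq> C}"
    using assms(2) by (rule rev_finite_subset[OF finite_Pow_iff[THEN iffD2]]) auto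
  moreover have "{e \<in> D. e \<subseteq> C} \<noteq> {}" using assms(4,5) by blast
  ultimately obtain m where m: "m \<in> D" "m \<subseteq> C" "\<forall>e'\<in>D. e' \<subseteq> C \<longrightarrow> (m, e') \<in> rk"
    using linear_order_on_finite_has_least[OF order _ _ assms(3)] by auto
  moreover have "antisym rk" using order by (simp add: linear_order_on_def partial_order_on_def)
  ultimately have "owner rk D C = m" by (intro owner_eqI)
  then show ?thesis using m by simp
qed

lemma Jprev_subset_Jst: "Jprev F Rs strat i t \<subseteq> Jst F Rs strat i t"
  by (cases t) (auto simp: Jprev_def Jst_def sn_state_def sn_step_def Let_def)

lemma Dst_eq_Jst_Diff_Jprev: "Dst F Rs strat i t = Jst F Rs strat i t - Jprev F Rs strat i t"
  by (cases t) (auto simp: Jprev_def Jst_def Dst_def sn_state_def sn_step_def Let_def)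

lemma Dst_Suc:
  "Dst F Rs strat i (Suc t) =
     sn_heads (rule_stratum Rs strat i) (Jst F Rs strat i t) (Dst F Rs strat i t) - Jst F Rs strat i t"
  by (simp add: Dst_def Jst_def sn_state_def sn_step_def Let_def)

definition reported_heads_rule ::
    "('v \<times> 'o) set rel \<Rightarrow> ('p,'v,'o) rule \<Rightarrow> ('p,'o) fact set \<Rightarrow> ('p,'o) fact set \<Rightarrow> ('p,'o) fact set"
  where "reported_heads_rule rk r J J' =
    {ground_atom (clique_subst C) (head r) | C e.
       is_clique (scg_verts r) (scg_edges r J) (card (vars_rule r)) C \<and>
       e \<in> scg_edges r J - scg_edges r J' \<and> e \<subseteq> C \<and>
       owner rk (scg_edges r J - scg_edges r J') C = e}"

definition sn_heads_rule :: "('p,'v,'o) rule \<Rightarrow> ('p,'o) fact set \<Rightarrow> ('p,'o) fact set \<Rightarrow> ('p,'o) fact set"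
  where "sn_heads_rule r J D = {ground_atom \<rho> (head r) | \<rho>. applicable J r \<rho> \<and> ground_pos r \<rho> \<inter> D \<noteq> {}}"

lemma reported_heads_eq_UN:
  "reported_heads F Rs strat rk i t =
    (\<Union>r\<in>rule_stratum Rs strat i.
       reported_heads_rule rk r (Jst F Rs strat i t) (Jprev F Rs strat i t))"
  unfolding reported_heads_def reported_heads_rule_def delta_edges_def by blast

lemma sn_heads_eq_UN: "sn_heads Rs J D = (\<Union>r\<in>Rs. sn_heads_rule r J D)"
  unfolding sn_heads_def sn_heads_rule_def by blast

lemma reported_heads_rule_eq_sn_heads_rule:
  assumes binary: "binary_rule r" and "J' \<subseteq> J" and order: "linear_order_on {e. card e = 2} rk"
  shows "reported_heads_rule rk r J J' = sn_heads_rule r J (J - J')"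
proof (intro equalityI subsetI)
  fix h assume "h \<in> reported_heads_rule rk r J J'"
  then obtain C e where clique: "is_clique (scg_verts r) (scg_edges r J) (card (vars_rule r)) C"
    and e: "e \<in> scg_edges r J - scg_edges r J'" "e \<subseteq> C"
    and h: "h = ground_atom (clique_subst C) (head r)"
    unfolding reported_heads_rule_def by blast
  have C: "C = subst_clique (clique_subst C) r"
    using clique binary binary_rule_finite_vars clique_eq_subst_clique by blast
  then have "applicable J r (clique_subst C)"
    using clique is_clique_subst_clique_iff_applicable[OF binary] by metis
  moreover have "ground_pos r (clique_subst C) \<inter> (J - J') \<noteq> {}"
    using delta_edge_in_subst_clique_iff[OF binary \<open>J' \<subseteq> J\<close> \<open>applicable J r (clique_subst C)\<close>] e C
    by blast
  ultimately show "h \<in> sn_heads_rule r J (J - J')"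
    unfolding sn_heads_rule_def h by blast
next
  fix h assume "h \<in> sn_heads_rule r J (J - J')"
  then obtain \<rho> where applicable: "applicable J r \<rho>" and new: "ground_pos r \<rho> \<inter> (J - J') \<noteq> {}"
    and h: "h = ground_atom \<rho> (head r)"
    unfolding sn_heads_rule_def by blast
  define C where "C = subst_clique \<rho> r"
  define E where "E = scg_edges r J - scg_edges r J'"
  have clique: "is_clique (scg_verts r) (scg_edges r J) (card (vars_rule r)) C"
    unfolding C_def using is_clique_subst_clique_iff_applicable[OF binary] applicable by blast
  obtain e where "e \<in> E" "e \<subseteq> C"
    using delta_edge_in_subst_clique_iff[OF binary \<open>J' \<subseteq> J\<close> applicable] new
    unfolding C_def E_def by blast
  moreover have "finite C" using clique by (simp add: is_clique_def)
  moreover have "{e \<in> E. e \<subseteq> C} \<subseteq> {e. card e = 2}" using card_scg_edge unfolding E_def by blast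
  ultimately have owner: "owner rk E C \<in> E \<and> owner rk E C \<subseteq> C"
    using owner_mem[OF order] by blast
  have "h = ground_atom (clique_subst C) (head r)"
    unfolding h C_def
    by (rule ground_atom_cong) (simp add: clique_subst_subst_clique vars_rule_def)
  then show "h \<in> reported_heads_rule rk r J J'"
    unfolding reported_heads_rule_def using clique owner unfolding E_def by blast
qed

theorem theorem2:
  fixes F :: "('p,'o) fact set" and Rs :: "('p,'v,'o) rule set"
    and ar :: "'p \<Rightarrow> nat" and strat :: "'p \<Rightarrow> nat" and l i t :: nat
    and rk :: "('v \<times> 'o) set rel"
  assumes "wf_program ar F Rs"
    and "stratification Rs l strat"
    and "i \<in> {1..l}"
    and "\<forall>r\<in>rule_stratum Rs strat i. card (vars_rule r) \<ge> 2"
    and "\<forall>r\<in>rule_stratum Rs strat i. \<forall>b\<in>body r. card (vars_lit b) \<le> 2"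
    and "linear_order_on {e. card e = 2} rk"
  shows "reported_heads F Rs strat rk i t
           = sn_heads (rule_stratum Rs strat i) (Jst F Rs strat i t) (Dst F Rs strat i t)
         \<and> Dst F Rs strat i (Suc t) = reported_heads F Rs strat rk i t - Jst F Rs strat i t"
proof -
  have "reported_heads_rule rk r (Jst F Rs strat i t) (Jprev F Rs strat i t)
      = sn_heads_rule r (Jst F Rs strat i t) (Dst F Rs strat i t)"
    if "r \<in> rule_stratum Rs strat i" for r
    unfolding Dst_eq_Jst_Diff_Jprev
    using that assms(4,5)
    by (intro reported_heads_rule_eq_sn_heads_rule Jprev_subset_Jst assms(6)) (simp add: binary_rule_def)
  then have "reported_heads F Rs strat rk i t
      = sn_heads (rule_stratum Rs strat i) (Jst F Rs strat i t) (Dst F Rs strat i t)"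
    unfolding reported_heads_eq_UN sn_heads_eq_UN by (rule SUP_cong[OF refl])
  then show ?thesis using Dst_Suc by simp
qed

end
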